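(* Let $-1\le a<1$ and $\mathfrak g=\mathfrak r_{3,a}$ (basis $\{e_1,e_2,e_3\}$, nonzero brackets $[e_1,e_2]=e_2$, $[e_1,e_3]=ae_3$), and let $\langle\cdot,\cdot\rangle_0$ be the inner product for which $\{e_1,e_2,e_3\}$ is orthonormal. An inner product $\langle\cdot,\cdot\rangle$ on $\mathfrak g$ is a solvsoliton if and only if $[\langle\cdot,\cdot\rangle]=[\langle\cdot,\cdot\rangle_0]$.
   Context: An inner product on a solvable Lie algebra $\mathfrak g$ is a solvsoliton if its Ricci operator satisfies $\mathrm{Ric}=cI+D$ for some $c\in\mathbb R$ and $D\in\mathrm{Der}(\mathfrak g)$ (Ricci operator of the metric Lie algebra defined via the Levi-Civita connection $2\langle\nabla_XY,Z\rangle=\langle[Z,X],Y\rangle+\langle X,[Z,Y]\rangle+\langle[X,Y],Z\rangle$, $R(X,Y)=[\nabla_X,\nabla_Y]-\nabla_{[X,Y]}$, $\mathrm{Ric}(X)=\sum_iR(X,e_i)e_i$ for an orthonormal basis). Two inner products are isometric up to scaling if $\langle\cdot,\cdot\rangle_1=k\langle f\cdot,f\cdot\rangle_2$ for some $k>0$ and Lie algebra automorphism $f$ of $\mathfrak g$; $[\langle\cdot,\cdot\rangle]$ denotes the equivalence class. *)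

theory Defs
  imports "HOL-Analysis.Analysis"
begin

text \<open>The Lie algebra r_{3,a} realised on real^3 with standard basis e1 = axis 1 1,
  e2 = axis 2 1, e3 = axis 3 1; nonzero brackets [e1,e2] = e2, [e1,e3] = a e3.\<close>
definition r3_bracket :: "real \<Rightarrow> real^3 \<Rightarrow> real^3 \<Rightarrow> real^3" where
  "r3_bracket a x y = (\<chi> i. if i = 2 then x$1 * y$2 - x$2 * y$1
                          else if i = 3 then a * (x$1 * y$3 - x$3 * y$1) else 0)"

definition is_inner_product :: "(real^3 \<Rightarrow> real^3 \<Rightarrow> real) \<Rightarrow> bool" where
  "is_inner_product B \<longleftrightarrow> bilinear B \<and> (\<forall>x y. B x y = B y x) \<and> (\<forall>x. x \<noteq> 0 \<longrightarrow> B x x > 0)"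

definition std_inner :: "real^3 \<Rightarrow> real^3 \<Rightarrow> real" where
  "std_inner x y = x \<bullet> y"

text \<open>Levi-Civita connection (Koszul formula for left-invariant metrics).\<close>
definition LC_nabla :: "(real^3 \<Rightarrow> real^3 \<Rightarrow> real^3) \<Rightarrow> (real^3 \<Rightarrow> real^3 \<Rightarrow> real)
     \<Rightarrow> real^3 \<Rightarrow> real^3 \<Rightarrow> real^3" where
  "LC_nabla br B X Y = (THE W. \<forall>Z. 2 * B W Z = B (br Z X) Y + B X (br Z Y) + B (br X Y) Z)"

definition curv :: "(real^3 \<Rightarrow> real^3 \<Rightarrow> real^3) \<Rightarrow> (real^3 \<Rightarrow> real^3 \<Rightarrow> real)
     \<Rightarrow> real^3 \<Rightarrow> real^3 \<Rightarrow> real^3 \<Rightarrow> real^3" where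
  "curv br B X Y Z = LC_nabla br B X (LC_nabla br B Y Z) - LC_nabla br B Y (LC_nabla br B X Z)
                     - LC_nabla br B (br X Y) Z"

definition orthonormal_frame :: "(real^3 \<Rightarrow> real^3 \<Rightarrow> real) \<Rightarrow> (3 \<Rightarrow> real^3) \<Rightarrow> bool" where
  "orthonormal_frame B e \<longleftrightarrow> (\<forall>i j. B (e i) (e j) = (if i = j then 1 else 0))"

text \<open>Ricci operator, computed in an orthonormal basis (the result does not depend on the choice).\<close>
definition Ricci :: "(real^3 \<Rightarrow> real^3 \<Rightarrow> real^3) \<Rightarrow> (real^3 \<Rightarrow> real^3 \<Rightarrow> real)
     \<Rightarrow> real^3 \<Rightarrow> real^3" where
  "Ricci br B X = (let e = (SOME e. orthonormal_frame B e) in (\<Sum>i\<in>UNIV. curv br B X (e i) (e i)))"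

definition is_derivation :: "(real^3 \<Rightarrow> real^3 \<Rightarrow> real^3) \<Rightarrow> (real^3 \<Rightarrow> real^3) \<Rightarrow> bool" where
  "is_derivation br D \<longleftrightarrow> linear D \<and> (\<forall>x y. D (br x y) = br (D x) y + br x (D y))"

definition is_automorphism :: "(real^3 \<Rightarrow> real^3 \<Rightarrow> real^3) \<Rightarrow> (real^3 \<Rightarrow> real^3) \<Rightarrow> bool" where
  "is_automorphism br f \<longleftrightarrow> linear f \<and> bij f \<and> (\<forall>x y. f (br x y) = br (f x) (f y))"

definition is_solvsoliton :: "(real^3 \<Rightarrow> real^3 \<Rightarrow> real^3) \<Rightarrow> (real^3 \<Rightarrow> real^3 \<Rightarrow> real) \<Rightarrow> bool" where
  "is_solvsoliton br B \<longleftrightarrow> (\<exists>c D. is_derivation br D \<and> (\<forall>X. Ricci br B X = c *\<^sub>R X + D X))"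

definition isometric_up_to_scaling :: "(real^3 \<Rightarrow> real^3 \<Rightarrow> real^3) \<Rightarrow> (real^3 \<Rightarrow> real^3 \<Rightarrow> real)
     \<Rightarrow> (real^3 \<Rightarrow> real^3 \<Rightarrow> real) \<Rightarrow> bool" where
  "isometric_up_to_scaling br B1 B2 \<longleftrightarrow>
     (\<exists>k f. k > 0 \<and> is_automorphism br f \<and> (\<forall>x y. B1 x y = k * B2 (f x) (f y)))"

end

theory Submission
  imports Defs
begin

text \<open>Gram--Schmidt applied to e2, e3, e1 (in this order) gives a change of basis Q that fixes
  the e1-coordinate and preserves the flag R e2 \<subset> span {e2, e3}. It is a Lie algebra
  isomorphism from r_{3,a} onto the algebra with brackets [e1,e2] = e2, [e1,e3] = b e2 + a e3
  and, up to a factor m, an isometry from the given inner product onto the standard one.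
  Ricci operators, derivations and hence solvsolitons are transported along such maps, so
  everything reduces to the standard inner product on these twisted brackets. For b = 0 it is a
  solvsoliton: Ric = -(1 + a^2) I + diag(0, a^2 - a, 1 - a). For a \<noteq> 1 every derivation maps
  e2 = [e1,e2] into the line through e2, whereas the e3-component of Ric e2 is -b; so a
  solvsoliton forces b = 0, and then Q is an automorphism.\<close>

lemma LC_nabla_eqI:
  assumes B: "is_inner_product B"
    and W: "\<And>Z. 2 * B W Z = B (br Z X) Y + B X (br Z Y) + B (br X Y) Z"
  shows "LC_nabla br B X Y = W"
  unfolding LC_nabla_def
proof (rule the_equality)
  show "\<forall>Z. 2 * B W Z = B (br Z X) Y + B X (br Z Y) + B (br X Y) Z" using W by blast
  fix W' assume W': "\<forall>Z. 2 * B W' Z = B (br Z X) Y + B X (br Z Y) + B (br X Y) Z"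
  have "bilinear B" and pos: "\<And>x. x \<noteq> 0 \<Longrightarrow> 0 < B x x"
    using B unfolding is_inner_product_def by blast+
  then have "B (W' - W) (W' - W) = 0"
    using W[of "W' - W"] W'[rule_format, of "W' - W"] by (simp add: bilinear_lsub)
  then show "W' = W" using pos by (metis less_irrefl right_minus_eq)
qed

text \<open>The Koszul formula for the standard inner product, solved coordinatewise with Z = e_k.\<close>
definition std_nabla :: "(real^3 \<Rightarrow> real^3 \<Rightarrow> real^3) \<Rightarrow> real^3 \<Rightarrow> real^3 \<Rightarrow> real^3" where
  "std_nabla br X Y = (\<chi> k. (br (axis k 1) X \<bullet> Y + X \<bullet> br (axis k 1) Y + br X Y $ k) / 2)"

lemma vector_3_expansion: "(z::real^3) = z$1 *\<^sub>R axis 1 1 + z$2 *\<^sub>R axis 2 1 + z$3 *\<^sub>R axis 3 1"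
  by (simp add: vec_eq_iff forall_3 axis_def)

lemma std_nabla_koszul:
  assumes "bilinear br"
  shows "2 * (std_nabla br X Y \<bullet> Z) = br Z X \<bullet> Y + X \<bullet> br Z Y + br X Y \<bullet> Z"
proof -
  have "br Z U = Z$1 *\<^sub>R br (axis 1 1) U + Z$2 *\<^sub>R br (axis 2 1) U + Z$3 *\<^sub>R br (axis 3 1) U" for U
    by (subst vector_3_expansion[of Z])
      (simp add: bilinear_ladd[OF assms] bilinear_lmul[OF assms])
  then show ?thesis
    by (simp add: std_nabla_def inner_vec_def[of _ Z] sum_3 inner_add_left inner_add_right
        field_simps)
qed

lemma bilinear_std_nabla:
  assumes "bilinear br"
  shows "bilinear (std_nabla br)"
  unfolding bilinear_def
  by (auto intro!: linearI simp: std_nabla_def vec_eq_iff bilinear_ladd[OF assms]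
      bilinear_radd[OF assms] bilinear_lmul[OF assms] bilinear_rmul[OF assms]
      add_divide_distrib algebra_simps)

lemma std_inner_is_inner_product: "is_inner_product std_inner"
  unfolding is_inner_product_def std_inner_def bilinear_def
  by (auto intro!: linearI simp: inner_add_left inner_add_right inner_commute)

lemma LC_nabla_std_inner:
  assumes "bilinear br"
  shows "LC_nabla br std_inner = std_nabla br"
  by (intro ext LC_nabla_eqI[OF std_inner_is_inner_product])
    (simp add: std_inner_def std_nabla_koszul[OF assms])

lemma bilinear_curv:
  assumes br: "bilinear br" and N: "bilinear (LC_nabla br B)"
  shows "bilinear (curv br B X)"
proof -
  have lin1: "linear (\<lambda>Y. LC_nabla br B Y Z)" and lin2: "linear (LC_nabla br B Y)" for Y Z
    using N unfolding bilinear_def by blast+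
  have "linear (br X)" using br unfolding bilinear_def by blast
  then show ?thesis
    unfolding bilinear_def curv_def
    by (intro allI conjI linear_compose_sub lin1 lin2
        linear_compose[OF lin1 lin2, unfolded o_def]
        linear_compose[OF lin2 lin2, unfolded o_def]
        linear_compose[OF \<open>linear (br X)\<close> lin1, unfolded o_def])
qed

lemma bilinear_axis_expansion:
  fixes T :: "real^'n \<Rightarrow> real^'n \<Rightarrow> 'b::real_vector"
  assumes T: "bilinear T"
  shows "T x y = (\<Sum>j\<in>UNIV. \<Sum>l\<in>UNIV. (x$j * y$l) *\<^sub>R T (axis j 1) (axis l 1))"
proof -
  have expansion: "(\<Sum>j\<in>UNIV. z$j *\<^sub>R axis j 1) = z" for z :: "real^'n"
    using basis_expansion[of z] by (simp add: scalar_mult_eq_scaleR)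
  have "T x y = T (\<Sum>j\<in>UNIV. x$j *\<^sub>R axis j 1) (\<Sum>l\<in>UNIV. y$l *\<^sub>R axis l 1)"
    by (simp only: expansion)
  also have "\<dots> = (\<Sum>(j,l)\<in>UNIV\<times>UNIV. T (x$j *\<^sub>R axis j 1) (y$l *\<^sub>R axis l 1))"
    by (rule bilinear_sum[OF T])
  also have "\<dots> = (\<Sum>j\<in>UNIV. \<Sum>l\<in>UNIV. (x$j * y$l) *\<^sub>R T (axis j 1) (axis l 1))"
    by (simp add: sum.cartesian_product bilinear_lmul[OF T] bilinear_rmul[OF T] mult.commute)
  finally show ?thesis .
qed

lemma orthonormal_frame_trace_eq:
  fixes T :: "real^3 \<Rightarrow> real^3 \<Rightarrow> 'b::real_vector"
  assumes T: "bilinear T" and e: "orthonormal_frame std_inner e"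
  shows "(\<Sum>i\<in>UNIV. T (e i) (e i)) = (\<Sum>i\<in>UNIV. T (axis i 1) (axis i 1))"
proof -
  define U :: "real^3^3" where "U = (\<chi> i j. e i $ j)"
  have "U ** transpose U = mat 1"
    using e by (simp add: U_def matrix_matrix_mult_def transpose_def mat_def vec_eq_iff
        orthonormal_frame_def std_inner_def inner_vec_def)
  then have "transpose U ** U = mat 1" by (simp add: matrix_left_right_inverse)
  then have columns_orthonormal: "(\<Sum>i\<in>UNIV. e i $ j * e i $ l) = (if j = l then 1 else 0)" for j l
    by (auto simp: U_def matrix_matrix_mult_def transpose_def mat_def vec_eq_iff)
  have "(\<Sum>i\<in>UNIV. T (e i) (e i))
      = (\<Sum>i\<in>UNIV. \<Sum>j\<in>UNIV. \<Sum>l\<in>UNIV. (e i$j * e i$l) *\<^sub>R T (axis j 1) (axis l 1))"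
    by (rule sum.cong[OF refl], rule bilinear_axis_expansion[OF T])
  also have "\<dots> = (\<Sum>j\<in>UNIV. \<Sum>l\<in>UNIV. \<Sum>i\<in>UNIV. (e i$j * e i$l) *\<^sub>R T (axis j 1) (axis l 1))"
    by (subst sum.swap) (rule sum.cong[OF refl], rule sum.swap)
  also have "\<dots> = (\<Sum>j\<in>UNIV. \<Sum>l\<in>UNIV. (\<Sum>i\<in>UNIV. e i$j * e i$l) *\<^sub>R T (axis j 1) (axis l 1))"
    by (simp add: scaleR_sum_left)
  also have "\<dots> = (\<Sum>j\<in>UNIV. T (axis j 1) (axis j 1))"
  proof -
    have "(if P then 1 else 0) *\<^sub>R v = (if P then v else 0)" for P and v :: 'b
      by simp
    then show ?thesis by (simp add: columns_orthonormal)
  qed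
  finally show ?thesis .
qed

lemma Ricci_std_inner:
  assumes "bilinear br"
  shows "Ricci br std_inner X = (\<Sum>i\<in>UNIV. curv br std_inner X (axis i 1) (axis i 1))"
proof -
  have "orthonormal_frame std_inner (\<lambda>i. axis i 1)"
    by (simp add: orthonormal_frame_def std_inner_def inner_axis_axis)
  then have "orthonormal_frame std_inner (SOME e. orthonormal_frame std_inner e)"
    by (rule someI[of "orthonormal_frame std_inner"])
  then show ?thesis
    unfolding Ricci_def Let_def
    by (intro orthonormal_frame_trace_eq bilinear_curv assms)
      (simp add: LC_nabla_std_inner[OF assms] bilinear_std_nabla[OF assms])
qed

lemma is_derivation_conj:
  assumes "linear P" and "linear R" and "\<And>x. R (P x) = x" and "\<And>y. P (R y) = y"
    and P_bracket: "\<And>x y. P (br x y) = br' (P x) (P y)"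
    and "is_derivation br D"
  shows "is_derivation br' (\<lambda>y. P (D (R y)))"
proof -
  have "linear D" and D_bracket: "\<And>x y. D (br x y) = br (D x) y + br x (D y)"
    using assms(6) unfolding is_derivation_def by blast+
  have R_bracket: "R (br' u v) = br (R u) (R v)" for u v
    by (metis assms(3,4) P_bracket)
  have "P (D (R (br' u v))) = br' (P (D (R u))) v + br' u (P (D (R v)))" for u v
    by (simp add: R_bracket D_bracket linear_add[OF \<open>linear P\<close>] P_bracket assms(4))
  moreover have "linear (\<lambda>y. P (D (R y)))"
    using linear_compose[OF linear_compose[OF \<open>linear R\<close> \<open>linear D\<close>] \<open>linear P\<close>]
    by (simp add: o_def)
  ultimately show ?thesis unfolding is_derivation_def by blast
qed

lemma is_derivation_scaleR:
  assumes "bilinear br" and "is_derivation br D"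
  shows "is_derivation br (\<lambda>x. k *\<^sub>R D x)"
  using assms unfolding is_derivation_def
  by (auto simp: linear_compose_scale_right bilinear_lmul bilinear_rmul scaleR_add_right)

locale scaled_isometry_to_std =
  fixes br br' :: "real^3 \<Rightarrow> real^3 \<Rightarrow> real^3" and B :: "real^3 \<Rightarrow> real^3 \<Rightarrow> real"
    and Q :: "real^3 \<Rightarrow> real^3" and m :: real
  assumes bilinear_br': "bilinear br'"
    and linear_Q: "linear Q" and bij_Q: "bij Q" and m_pos: "m > 0"
    and B_eq: "B x y = m * (Q x \<bullet> Q y)"
    and Q_bracket: "Q (br x y) = br' (Q x) (Q y)"
begin

lemma Q_inv_Q [simp]: "Q (inv Q y) = y"
  by (rule surj_f_inv_f[OF bij_is_surj[OF bij_Q]])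

lemma inv_Q_Q [simp]: "inv Q (Q x) = x"
  by (rule inv_f_f[OF bij_is_inj[OF bij_Q]])

lemma linear_inv_Q: "linear (inv Q)"
  by (rule inj_linear_imp_inv_linear[OF linear_Q bij_is_inj[OF bij_Q]])

lemma is_inner_product_B: "is_inner_product B"
proof -
  have "bilinear B"
    unfolding bilinear_def B_eq
    by (auto intro!: linearI simp: linear_add[OF linear_Q] linear_scale[OF linear_Q]
        inner_add_left inner_add_right distrib_left)
  moreover have "B x x > 0" if "x \<noteq> 0" for x
  proof -
    have "Q x \<noteq> 0" by (metis that inv_Q_Q linear_0[OF linear_inv_Q])
    then show ?thesis by (simp add: B_eq m_pos)
  qed
  ultimately show ?thesis
    unfolding is_inner_product_def by (simp add: B_eq inner_commute)
qed

lemma inv_Q_bracket: "inv Q (br' u v) = br (inv Q u) (inv Q v)"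
  by (metis Q_bracket Q_inv_Q inv_Q_Q)

lemma LC_nabla_transfer:
  "LC_nabla br B X Y = inv Q (LC_nabla br' std_inner (Q X) (Q Y))"
proof (rule LC_nabla_eqI[OF is_inner_product_B])
  fix Z
  show "2 * B (inv Q (LC_nabla br' std_inner (Q X) (Q Y))) Z
      = B (br Z X) Y + B X (br Z Y) + B (br X Y) Z"
    by (simp add: B_eq Q_bracket LC_nabla_std_inner[OF bilinear_br']
        std_nabla_koszul[OF bilinear_br'] algebra_simps flip: mult.assoc)
qed

lemma curv_transfer: "curv br B X Y Z = inv Q (curv br' std_inner (Q X) (Q Y) (Q Z))"
  by (simp add: curv_def LC_nabla_transfer Q_bracket linear_diff[OF linear_inv_Q])

lemma Ricci_transfer: "Ricci br B X = (1/m) *\<^sub>R inv Q (Ricci br' std_inner (Q X))"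
proof -
  define e where "e = (SOME e. orthonormal_frame B e)"
  have "orthonormal_frame B (\<lambda>i. (1/sqrt m) *\<^sub>R inv Q (axis i 1))"
    using m_pos by (simp add: orthonormal_frame_def B_eq linear_scale[OF linear_Q] inner_axis_axis)
  then have "orthonormal_frame B e"
    unfolding e_def by (rule someI[of "orthonormal_frame B"])
  then have std_frame: "orthonormal_frame std_inner (\<lambda>i. sqrt m *\<^sub>R Q (e i))"
    using m_pos by (simp add: orthonormal_frame_def std_inner_def B_eq flip: mult.assoc)
  have curv_bilinear: "bilinear (curv br' std_inner (Q X))"
    by (intro bilinear_curv bilinear_br')
      (simp add: LC_nabla_std_inner[OF bilinear_br'] bilinear_std_nabla[OF bilinear_br'])
  have "Ricci br B X = inv Q (\<Sum>i\<in>UNIV. curv br' std_inner (Q X) (Q (e i)) (Q (e i)))"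
    by (simp add: Ricci_def Let_def e_def curv_transfer linear_sum[OF linear_inv_Q])
  also have "(\<Sum>i\<in>UNIV. curv br' std_inner (Q X) (Q (e i)) (Q (e i)))
      = (1/m) *\<^sub>R (\<Sum>i\<in>UNIV. curv br' std_inner (Q X) (sqrt m *\<^sub>R Q (e i)) (sqrt m *\<^sub>R Q (e i)))"
    using m_pos by (simp add: bilinear_lmul[OF curv_bilinear] bilinear_rmul[OF curv_bilinear]
        scaleR_sum_right)
  also have "\<dots> = (1/m) *\<^sub>R Ricci br' std_inner (Q X)"
    by (simp add: orthonormal_frame_trace_eq[OF curv_bilinear std_frame]
        Ricci_std_inner[OF bilinear_br'])
  finally show ?thesis by (simp add: linear_scale[OF linear_inv_Q])
qed

lemma is_solvsoliton_iff: "is_solvsoliton br B \<longleftrightarrow> is_solvsoliton br' std_inner"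
proof
  assume "is_solvsoliton br B"
  then obtain c D where D: "is_derivation br D" and Ricci_eq: "\<And>X. Ricci br B X = c *\<^sub>R X + D X"
    unfolding is_solvsoliton_def by blast
  have "Ricci br' std_inner Y = (m * c) *\<^sub>R Y + m *\<^sub>R Q (D (inv Q Y))" for Y
  proof -
    have "Ricci br' std_inner Y = m *\<^sub>R Q (Ricci br B (inv Q Y))"
      using m_pos by (simp add: Ricci_transfer linear_scale[OF linear_Q])
    then show ?thesis
      by (simp add: Ricci_eq linear_add[OF linear_Q] linear_scale[OF linear_Q] scaleR_add_right)
  qed
  moreover have "is_derivation br' (\<lambda>Y. m *\<^sub>R Q (D (inv Q Y)))"
    by (intro is_derivation_scaleR bilinear_br'
        is_derivation_conj[of Q "inv Q" br br', OF linear_Q linear_inv_Q inv_Q_Q Q_inv_Q Q_bracket D])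
  ultimately show "is_solvsoliton br' std_inner"
    unfolding is_solvsoliton_def by blast
next
  assume "is_solvsoliton br' std_inner"
  then obtain c D where D: "is_derivation br' D"
    and Ricci_eq: "\<And>Y. Ricci br' std_inner Y = c *\<^sub>R Y + D Y"
    unfolding is_solvsoliton_def by blast
  have "Ricci br B X = (c / m) *\<^sub>R X + inv Q ((1/m) *\<^sub>R D (Q X))" for X
    by (simp add: Ricci_transfer Ricci_eq linear_add[OF linear_inv_Q] linear_scale[OF linear_inv_Q]
        scaleR_add_right)
  moreover have "is_derivation br (\<lambda>X. inv Q ((1/m) *\<^sub>R D (Q X)))"
    by (rule is_derivation_conj[of "inv Q" Q br' br, OF linear_inv_Q linear_Q Q_inv_Q inv_Q_Q inv_Q_bracket
          is_derivation_scaleR[OF bilinear_br' D]])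
  ultimately show "is_solvsoliton br B"
    unfolding is_solvsoliton_def by blast
qed

end

text \<open>[e1,e2] = e2, [e1,e3] = b e2 + a e3: the bracket of r_{3,a} in a basis in which
  ad e1 is triangular on span {e2, e3} rather than diagonal.\<close>
definition r3_twisted_bracket :: "real \<Rightarrow> real \<Rightarrow> real^3 \<Rightarrow> real^3 \<Rightarrow> real^3" where
  "r3_twisted_bracket a b x y = (\<chi> i.
     if i = 2 then (x$1 * y$2 - x$2 * y$1) + b * (x$1 * y$3 - x$3 * y$1)
     else if i = 3 then a * (x$1 * y$3 - x$3 * y$1) else 0)"

lemma r3_twisted_bracket_0: "r3_twisted_bracket a 0 = r3_bracket a"
  by (intro ext) (simp add: r3_twisted_bracket_def r3_bracket_def vec_eq_iff)

lemma bilinear_r3_twisted_bracket: "bilinear (r3_twisted_bracket a b)"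
  unfolding bilinear_def
  by (auto intro!: linearI simp: r3_twisted_bracket_def vec_eq_iff algebra_simps)

lemma Ricci_r3_twisted_bracket_axis2:
  "Ricci (r3_twisted_bracket a b) std_inner (axis 2 1) $ 3 = - b"
  by (simp add: Ricci_std_inner[OF bilinear_r3_twisted_bracket] curv_def
      LC_nabla_std_inner[OF bilinear_r3_twisted_bracket] std_nabla_def r3_twisted_bracket_def
      sum_3 inner_vec_def axis_def)

lemma r3_twisted_bracket_solvsoliton_imp_untwisted:
  assumes "a \<noteq> 1" and "is_solvsoliton (r3_twisted_bracket a b) std_inner"
  shows "b = 0"
proof -
  let ?br = "r3_twisted_bracket a b" and ?e1 = "axis 1 1 :: real^3" and ?e2 = "axis 2 1 :: real^3"
  obtain c D where D: "is_derivation ?br D" and Ricci_eq: "\<And>X. Ricci ?br std_inner X = c *\<^sub>R X + D X"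
    using assms(2) unfolding is_solvsoliton_def by blast
  txt \<open>Since e2 = [e1,e2] and a \<noteq> 1, the derivation D cannot move e2 in the e3-direction.\<close>
  have "?br ?e1 ?e2 = ?e2"
    by (simp add: r3_twisted_bracket_def vec_eq_iff axis_def forall_3)
  then have "D ?e2 = D (?br ?e1 ?e2)" by simp
  also have "\<dots> = ?br (D ?e1) ?e2 + ?br ?e1 (D ?e2)"
    using D unfolding is_derivation_def by blast
  finally have "D ?e2 $ 3 = (?br (D ?e1) ?e2 + ?br ?e1 (D ?e2)) $ 3"
    by simp
  also have "\<dots> = a * D ?e2 $ 3"
    by (simp add: r3_twisted_bracket_def axis_def)
  finally have "D ?e2 $ 3 = a * D ?e2 $ 3" .
  with \<open>a \<noteq> 1\<close> have "D ?e2 $ 3 = 0"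
    by (metis mult_cancel_right1)
  then show "b = 0"
    using Ricci_eq[of ?e2] Ricci_r3_twisted_bracket_axis2[of a b] by (simp add: axis_def)
qed

lemma bilinear_r3_bracket: "bilinear (r3_bracket a)"
  using bilinear_r3_twisted_bracket[of a 0] by (simp add: r3_twisted_bracket_0)

lemma std_inner_is_solvsoliton_r3: "is_solvsoliton (r3_bracket a) std_inner"
proof -
  define D :: "real^3 \<Rightarrow> real^3" where
    "D Y = (\<chi> i. if i = 2 then (a^2 - a) * Y$2 else if i = 3 then (1 - a) * Y$3 else 0)" for Y
  have "is_derivation (r3_bracket a) D"
    unfolding is_derivation_def
    by (auto intro!: linearI simp: D_def r3_bracket_def vec_eq_iff forall_3 algebra_simps
        power2_eq_square)
  moreover have "Ricci (r3_bracket a) std_inner Y = (- (1 + a^2)) *\<^sub>R Y + D Y" for Y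
    by (simp add: Ricci_std_inner[OF bilinear_r3_bracket] curv_def
        LC_nabla_std_inner[OF bilinear_r3_bracket] std_nabla_def r3_bracket_def D_def
        sum_3 inner_vec_def axis_def vec_eq_iff forall_3)
      (auto simp: algebra_simps power2_eq_square)
  ultimately show ?thesis
    unfolding is_solvsoliton_def by blast
qed

lemma symmetric_bilinear_expansion:
  fixes B :: "real^3 \<Rightarrow> real^3 \<Rightarrow> real"
  assumes bil: "bilinear B" and sym: "\<And>x y. B x y = B y x"
  shows "B x y = x$1 * y$1 * B (axis 1 1) (axis 1 1)
      + (x$1 * y$2 + x$2 * y$1) * B (axis 1 1) (axis 2 1)
      + (x$1 * y$3 + x$3 * y$1) * B (axis 1 1) (axis 3 1)
      + x$2 * y$2 * B (axis 2 1) (axis 2 1)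
      + (x$2 * y$3 + x$3 * y$2) * B (axis 2 1) (axis 3 1)
      + x$3 * y$3 * B (axis 3 1) (axis 3 1)"
  by (simp add: bilinear_axis_expansion[OF bil, of x y] sum_3 sym[of "axis 2 1" "axis 1 1"]
      sym[of "axis 3 1" "axis 1 1"] sym[of "axis 3 1" "axis 2 1"] algebra_simps)

lemma inner_product_triangular_form:
  assumes "is_inner_product B"
  obtains m p r \<alpha> q \<beta> :: real where "m > 0" and "p > 0" and "r > 0"
    and "\<And>x y. B x y = m * (x$1 * y$1
          + (p * (x$2 - \<alpha> * x$1) + q * (x$3 - \<beta> * x$1)) * (p * (y$2 - \<alpha> * y$1) + q * (y$3 - \<beta> * y$1))
          + r^2 * ((x$3 - \<beta> * x$1) * (y$3 - \<beta> * y$1)))"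
proof -
  have pos: "\<And>x. x \<noteq> 0 \<Longrightarrow> B x x > 0"
    using assms unfolding is_inner_product_def by blast
  define G where "G i j = B (axis i 1) (axis j 1)" for i j
  have B_gram: "B x y = x$1 * y$1 * G 1 1 + (x$1 * y$2 + x$2 * y$1) * G 1 2
      + (x$1 * y$3 + x$3 * y$1) * G 1 3 + x$2 * y$2 * G 2 2 + (x$2 * y$3 + x$3 * y$2) * G 2 3
      + x$3 * y$3 * G 3 3" for x y
    using assms unfolding is_inner_product_def G_def by (blast intro: symmetric_bilinear_expansion)
  have G22: "G 2 2 > 0" and G33: "G 3 3 > 0"
    unfolding G_def by (simp_all add: pos vec_eq_iff axis_def)
  define \<Delta> where "\<Delta> = G 2 2 * G 3 3 - (G 2 3)^2"
  define v :: "real^3" where "v = (\<chi> i. if i = 2 then G 3 3 else if i = 3 then - G 2 3 else 0)"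
  have "G 3 3 * \<Delta> = B v v"
    by (simp add: B_gram v_def \<Delta>_def algebra_simps power2_eq_square)
  also have "\<dots> > 0"
    using G33 by (intro pos) (auto simp: v_def vec_eq_iff intro!: exI[of _ 2])
  finally have \<Delta>: "\<Delta> > 0" using G33 by (simp add: zero_less_mult_iff)
  txt \<open>Cramer's rule makes w = e1 + \<alpha> e2 + \<beta> e3 B-orthogonal to e2 and e3; m is B w w.\<close>
  define \<alpha> where "\<alpha> = (G 1 3 * G 2 3 - G 1 2 * G 3 3) / \<Delta>"
  define \<beta> where "\<beta> = (G 1 2 * G 2 3 - G 1 3 * G 2 2) / \<Delta>"
  have "\<alpha> * \<Delta> = G 1 3 * G 2 3 - G 1 2 * G 3 3" and "\<beta> * \<Delta> = G 1 2 * G 2 3 - G 1 3 * G 2 2"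
    using \<Delta> by (simp_all add: \<alpha>_def \<beta>_def)
  then have "(\<alpha> * G 2 2 + \<beta> * G 2 3) * \<Delta> = - G 1 2 * \<Delta>"
    and "(\<alpha> * G 2 3 + \<beta> * G 3 3) * \<Delta> = - G 1 3 * \<Delta>"
    unfolding \<Delta>_def by algebra+
  then have \<alpha>\<beta>: "\<alpha> * G 2 2 + \<beta> * G 2 3 = - G 1 2" "\<alpha> * G 2 3 + \<beta> * G 3 3 = - G 1 3"
    using \<Delta> by (metis less_irrefl minus_mult_left mult_right_cancel)+
  define m where "m = G 1 1 + \<alpha> * G 1 2 + \<beta> * G 1 3"
  define w :: "real^3" where "w = (\<chi> i. if i = 1 then 1 else if i = 2 then \<alpha> else \<beta>)"
  have "m = B w w"
    by (simp add: B_gram w_def m_def) (use \<alpha>\<beta> in algebra)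
  also have "\<dots> > 0"
    by (intro pos) (auto simp: w_def vec_eq_iff intro!: exI[of _ 1])
  finally have m: "m > 0" .
  define p where "p = sqrt (G 2 2 / m)"
  define q where "q = G 2 3 / (m * p)"
  define r where "r = sqrt (G 3 3 / m - q^2)"
  have p: "p > 0" "m * p^2 = G 2 2" using m G22 by (simp_all add: p_def)
  have mpq: "m * p * q = G 2 3" using m p by (simp add: q_def)
  have "G 3 3 / m - q^2 = \<Delta> / (m * G 2 2)"
    using m p by (simp add: q_def \<Delta>_def power_divide field_simps flip: p(2)) (simp add: power2_eq_square)
  then have "G 3 3 / m - q^2 > 0"
    using m G22 \<Delta> by simp
  then have r: "r > 0" "m * (q^2 + r^2) = G 3 3"
    using m by (simp_all add: r_def field_simps)
  show thesis
    by (rule that[of m p r \<alpha> q \<beta>, OF m p(1) r(1)])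
      (unfold B_gram, use \<alpha>\<beta> m_def p(2) mpq r(2) in algebra)
qed

lemma r3_inner_product_normal_form:
  assumes "is_inner_product B"
  obtains m b Q where "scaled_isometry_to_std (r3_bracket a) (r3_twisted_bracket a b) B Q m"
proof -
  obtain m p r \<alpha> q \<beta> where m: "m > 0" and p: "p > 0" and r: "r > 0"
    and B_eq: "\<And>x y. B x y = m * (x$1 * y$1
          + (p * (x$2 - \<alpha> * x$1) + q * (x$3 - \<beta> * x$1)) * (p * (y$2 - \<alpha> * y$1) + q * (y$3 - \<beta> * y$1))
          + r^2 * ((x$3 - \<beta> * x$1) * (y$3 - \<beta> * y$1)))"
    using inner_product_triangular_form[OF assms] by metis
  define Q :: "real^3 \<Rightarrow> real^3" where
    "Q x = (\<chi> i. if i = 1 then x$1 else if i = 2 then p * (x$2 - \<alpha> * x$1) + q * (x$3 - \<beta> * x$1)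
                  else r * (x$3 - \<beta> * x$1))" for x
  define Q' :: "real^3 \<Rightarrow> real^3" where
    "Q' y = (\<chi> i. if i = 1 then y$1 else if i = 2 then \<alpha> * y$1 + (y$2 - q * y$3 / r) / p
                  else \<beta> * y$1 + y$3 / r)" for y
  have "Q (Q' y) = y" and "Q' (Q x) = x" for x y
    using p r by (simp_all add: Q_def Q'_def vec_eq_iff forall_3 field_simps)
  then have "bij Q"
    by (intro o_bij[of Q']) auto
  moreover have "linear Q"
    by (rule linearI) (simp_all add: Q_def vec_eq_iff algebra_simps)
  moreover have "B x y = m * (Q x \<bullet> Q y)" for x y
    by (simp add: B_eq Q_def inner_vec_def sum_3 algebra_simps power2_eq_square)
  moreover have "Q (r3_bracket a x y) = r3_twisted_bracket a ((a - 1) * q / r) (Q x) (Q y)" for x y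
    using r by (simp add: Q_def r3_bracket_def r3_twisted_bracket_def vec_eq_iff forall_3
        field_simps)
  ultimately show thesis
    by (intro that[of "(a - 1) * q / r" Q m] scaled_isometry_to_std.intro
        bilinear_r3_twisted_bracket m)
qed

theorem proposition4p9:
  fixes a :: real and B :: "real^3 \<Rightarrow> real^3 \<Rightarrow> real"
  assumes "-1 \<le> a" and "a < 1"
    and "is_inner_product B"
  shows "is_solvsoliton (r3_bracket a) B \<longleftrightarrow> isometric_up_to_scaling (r3_bracket a) B std_inner"
proof
  assume soliton: "is_solvsoliton (r3_bracket a) B"
  obtain m b Q where "scaled_isometry_to_std (r3_bracket a) (r3_twisted_bracket a b) B Q m"
    using r3_inner_product_normal_form[OF assms(3)] .
  then interpret scaled_isometry_to_std "r3_bracket a" "r3_twisted_bracket a b" B Q m .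
  have "b = 0"
    using soliton \<open>a < 1\<close>
    by (intro r3_twisted_bracket_solvsoliton_imp_untwisted) (simp_all add: is_solvsoliton_iff)
  then show "isometric_up_to_scaling (r3_bracket a) B std_inner"
    unfolding isometric_up_to_scaling_def is_automorphism_def
    using m_pos linear_Q bij_Q Q_bracket B_eq by (auto simp: r3_twisted_bracket_0 std_inner_def)
next
  assume "isometric_up_to_scaling (r3_bracket a) B std_inner"
  then obtain k f where "k > 0" and "is_automorphism (r3_bracket a) f"
    and "\<And>x y. B x y = k * std_inner (f x) (f y)"
    unfolding isometric_up_to_scaling_def by blast
  then have "scaled_isometry_to_std (r3_bracket a) (r3_bracket a) B f k"
    unfolding scaled_isometry_to_std_def is_automorphism_def
    by (simp add: bilinear_r3_bracket std_inner_def)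
  then interpret scaled_isometry_to_std "r3_bracket a" "r3_bracket a" B f k .
  show "is_solvsoliton (r3_bracket a) B"
    using std_inner_is_solvsoliton_r3 by (simp add: is_solvsoliton_iff)
qed

end
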